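(* Let $\mathcal{S}=\langle\mathcal{L},\vdash\rangle$ be a logical structure with $\mathcal{L}$ infinite, and let $\varrho\subseteq\mathcal{P}(\mathcal{L})\times\mathcal{L}$ have finite reach. Then the principles gECQ and spECQ both fail in $\langle\mathcal{L},\vdash^\varrho\rangle$ and in $\langle\mathcal{L},\vdash^{p\varrho}\rangle$.
   Context: A logical structure is a pair $\langle\mathcal{L},\vdash\rangle$ with $\mathcal{L}$ a set and $\vdash\subseteq\mathcal{P}(\mathcal{L})\times\mathcal{L}$ arbitrary. For $\varrho\subseteq\mathcal{P}(\mathcal{L})\times\mathcal{L}$: $\Gamma\vdash^\varrho\alpha$ iff there is $\Delta\subseteq\Gamma$ with $(\Delta,\alpha)\in\varrho$ and $\Delta\vdash\alpha$; $\Gamma\vdash^{p\varrho}\alpha$ iff there is a nonempty $\Delta\subseteq\Gamma$ with $(\Delta,\alpha)\in\varrho$ and $\Delta\vdash\alpha$. $\varrho$ has finite reach if for every $\Delta\subseteq\mathcal{L}$ the set $\{\alpha\mid(\Delta,\alpha)\in\varrho\}$ is finite. For a logical structure $\langle\mathcal{L},\vdash'\rangle$: gECQ holds if for every $\alpha\in\mathcal{L}$ there is $\beta\in\mathcal{L}$ such that $\{\alpha,\beta\}\vdash'\gamma$ for all $\gamma\in\mathcal{L}$; spECQ holds if for every $\Gamma\subsetneq\mathcal{L}$ there is $\alpha\in\mathcal{L}$ such that $\Gamma\cup\{\alpha\}\subsetneq\mathcal{L}$ and $\Gamma\cup\{\alpha\}\vdash'\beta$ for all $\beta\in\mathcal{L}$.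 *)

theory Defs
  imports Main
begin

text \<open>A logical structure over the language UNIV :: 'a set: a consequence
relation given as a predicate on (premise set, formula).\<close>

type_synonym 'a cons_rel = "'a set \<Rightarrow> 'a \<Rightarrow> bool"

definition restr :: "('a set \<times> 'a) set \<Rightarrow> 'a cons_rel \<Rightarrow> 'a cons_rel" where
  "restr \<rho> D \<Gamma> \<alpha> \<longleftrightarrow> (\<exists>\<Delta>. \<Delta> \<subseteq> \<Gamma> \<and> (\<Delta>, \<alpha>) \<in> \<rho> \<and> D \<Delta> \<alpha>)"

definition prestr :: "('a set \<times> 'a) set \<Rightarrow> 'a cons_rel \<Rightarrow> 'a cons_rel" where
  "prestr \<rho> D \<Gamma> \<alpha> \<longleftrightarrow> (\<exists>\<Delta>. \<Delta> \<noteq> {} \<and> \<Delta> \<subseteq> \<Gamma> \<and> (\<Delta>, \<alpha>) \<in> \<rho> \<and> D \<Delta> \<alpha>)"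

definition finite_reach :: "('a set \<times> 'a) set \<Rightarrow> bool" where
  "finite_reach \<rho> \<longleftrightarrow> (\<forall>\<Delta>. finite {\<alpha>. (\<Delta>, \<alpha>) \<in> \<rho>})"

definition gECQ :: "'a cons_rel \<Rightarrow> bool" where
  "gECQ D \<longleftrightarrow> (\<forall>\<alpha>. \<exists>\<beta>. \<forall>\<gamma>. D {\<alpha>, \<beta>} \<gamma>)"

definition spECQ :: "'a cons_rel \<Rightarrow> bool" where
  "spECQ D \<longleftrightarrow> (\<forall>\<Gamma>. \<Gamma> \<subset> UNIV \<longrightarrow>
      (\<exists>\<alpha>. insert \<alpha> \<Gamma> \<subset> UNIV \<and> (\<forall>\<beta>. D (insert \<alpha> \<Gamma>) \<beta>)))"

end

theory Submission
  imports Defs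
begin

text \<open>A finite premise set has only finitely many subsets, and by finite reach each of them
  licenses only finitely many conclusions under \<open>\<rho>\<close>; so under \<open>\<turnstile>\<^sup>\<rho>\<close> (and a fortiori under
  \<open>\<turnstile>\<^sup>p\<^sup>\<rho>\<close>) a finite set never entails every formula of an infinite language. Both gECQ
  and spECQ (the latter applied to the empty set) would produce a finite set that does.\<close>

lemma finite_restr_conclusions:
  assumes "finite_reach \<rho>" and "finite \<Gamma>"
  shows "finite {\<beta>. restr \<rho> D \<Gamma> \<beta>}"
proof (rule finite_subset)
  show "{\<beta>. restr \<rho> D \<Gamma> \<beta>} \<subseteq> (\<Union>\<Delta>\<in>Pow \<Gamma>. {\<alpha>. (\<Delta>, \<alpha>) \<in> \<rho>})"
    by (auto simp: restr_def)
  show "finite (\<Union>\<Delta>\<in>Pow \<Gamma>. {\<alpha>. (\<Delta>, \<alpha>) \<in> \<rho>})"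
    using assms by (simp add: finite_reach_def)
qed

lemma prestr_imp_restr: "prestr \<rho> D \<Gamma> \<beta> \<Longrightarrow> restr \<rho> D \<Gamma> \<beta>"
  unfolding prestr_def restr_def by blast

lemma restr_finite_not_explosive:
  assumes "infinite (UNIV :: 'a set)" and "finite_reach \<rho>" and "finite (\<Gamma> :: 'a set)"
  shows "\<exists>\<beta>. \<not> restr \<rho> D \<Gamma> \<beta>"
proof (rule ccontr)
  assume "\<nexists>\<beta>. \<not> restr \<rho> D \<Gamma> \<beta>"
  then have "{\<beta>. restr \<rho> D \<Gamma> \<beta>} = UNIV" by simp
  with finite_restr_conclusions[OF assms(2,3), of D] assms(1) show False by simp
qed

lemma prestr_finite_not_explosive:
  assumes "infinite (UNIV :: 'a set)" and "finite_reach \<rho>" and "finite (\<Gamma> :: 'a set)"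
  shows "\<exists>\<beta>. \<not> prestr \<rho> D \<Gamma> \<beta>"
  using restr_finite_not_explosive[OF assms] prestr_imp_restr by metis

lemma not_gECQ_if_finite_not_explosive:
  assumes "\<And>\<Gamma>. finite \<Gamma> \<Longrightarrow> \<exists>\<beta>. \<not> D \<Gamma> \<beta>"
  shows "\<not> gECQ D"
proof
  assume "gECQ D"
  then obtain \<beta> where "\<forall>\<gamma>. D {undefined, \<beta>} \<gamma>"
    unfolding gECQ_def by blast
  with assms[of "{undefined, \<beta>}"] show False by blast
qed

lemma not_spECQ_if_finite_not_explosive:
  assumes "\<And>\<Gamma>. finite \<Gamma> \<Longrightarrow> \<exists>\<beta>. \<not> D \<Gamma> \<beta>"
  shows "\<not> spECQ D"
proof
  assume "spECQ D"
  moreover have "{} \<subset> (UNIV :: 'a set)" by auto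
  ultimately obtain \<alpha> where "\<forall>\<beta>. D (insert \<alpha> {}) \<beta>"
    unfolding spECQ_def by meson
  with assms[of "{\<alpha>}"] show False by blast
qed

theorem corollary3p19:
  fixes D :: "'a cons_rel" and \<rho> :: "('a set \<times> 'a) set"
  assumes "infinite (UNIV :: 'a set)"
    and "finite_reach \<rho>"
  shows "\<not> gECQ (restr \<rho> D) \<and> \<not> spECQ (restr \<rho> D)
       \<and> \<not> gECQ (prestr \<rho> D) \<and> \<not> spECQ (prestr \<rho> D)"
proof -
  have "\<exists>\<beta>. \<not> restr \<rho> D \<Gamma> \<beta>" and "\<exists>\<beta>. \<not> prestr \<rho> D \<Gamma> \<beta>" if "finite \<Gamma>" for \<Gamma>
    using restr_finite_not_explosive[OF assms that] prestr_finite_not_explosive[OF assms that] .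
  then show ?thesis
    using not_gECQ_if_finite_not_explosive not_spECQ_if_finite_not_explosive by metis
qed

end
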